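(* Consider the two-valued atomic model under the proportional-to-square-roots scheme, with $n_b$ large players of stake $a$ and $n_s$ small players of stake $1$, and suppose $n_s\ge h^2+n_b\lceil h-\sqrt a+1\rceil$. Then the Price of Stability satisfies \[\mathrm{PoS}\le\frac{h+1}{h}\cdot\frac{n_b a+n_s}{n_b(\sqrt a-1)+n_s-h-1}.\]
   Context: Atomic model with threshold $h$: every player has stake $1$ (small) or $a$ (large), with $h,a$ integers, $2\le a\le h-1$. Each player opens her own pool or joins one; pools partition the players; a pool $C$ has reward $\rho(C)=1$ if its total stake is at least $h$ (winning), else $0$. Proportional-to-square-roots scheme: player $i$ with stake $a_i$ in pool $C$ receives $\frac{\sqrt{a_i}}{\sum_{j\in C}\sqrt{a_j}}\rho(C)$. A partition into winning pools is a Nash equilibrium if no player can strictly increase her payment by moving to another pool or opening a new pool alone. $OPT(G)$ is the maximum number of pools of stake at least $h$ in a partition of the players; $W(\Pi)$ is the number of winning pools of $\Pi$; the Price of Stability is $\min_\Pi OPT(G)/W(\Pi)$ over Nash equilibrium partitions. *)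

theory Defs
  imports Complex_Main "HOL-Library.Disjoint_Sets"
begin

definition stake :: "('p \<Rightarrow> nat) \<Rightarrow> 'p set \<Rightarrow> nat" where
  "stake s C = (\<Sum>j\<in>C. s j)"

definition rho :: "nat \<Rightarrow> ('p \<Rightarrow> nat) \<Rightarrow> 'p set \<Rightarrow> real" where
  "rho h s C = (if stake s C \<ge> h then 1 else 0)"

definition sqrt_pay :: "nat \<Rightarrow> ('p \<Rightarrow> nat) \<Rightarrow> 'p set \<Rightarrow> 'p \<Rightarrow> real" where
  "sqrt_pay h s C i = sqrt (real (s i)) / (\<Sum>j\<in>C. sqrt (real (s j))) * rho h s C"

definition winning :: "nat \<Rightarrow> ('p \<Rightarrow> nat) \<Rightarrow> 'p set \<Rightarrow> bool" where
  "winning h s C \<longleftrightarrow> stake s C \<ge> h"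

definition is_NE :: "nat \<Rightarrow> ('p \<Rightarrow> nat) \<Rightarrow> 'p set \<Rightarrow> 'p set set \<Rightarrow> bool" where
  "is_NE h s P Q \<longleftrightarrow>
     partition_on P Q \<and> (\<forall>C\<in>Q. winning h s C) \<and>
     (\<forall>C\<in>Q. \<forall>i\<in>C.
        (\<forall>D\<in>Q. D \<noteq> C \<longrightarrow> sqrt_pay h s (insert i D) i \<le> sqrt_pay h s C i) \<and>
        sqrt_pay h s {i} i \<le> sqrt_pay h s C i)"

definition W :: "nat \<Rightarrow> ('p \<Rightarrow> nat) \<Rightarrow> 'p set set \<Rightarrow> nat" where
  "W h s Q = card {C\<in>Q. winning h s C}"

definition OPT :: "nat \<Rightarrow> ('p \<Rightarrow> nat) \<Rightarrow> 'p set \<Rightarrow> nat" where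
  "OPT h s P = Max {W h s Q | Q. partition_on P Q}"

end

theory Submission
  imports Defs
begin

text \<open>A partition into winning pools whose square-root weights (sums of the square roots of
  the members' stakes) lie in [h, h + 1] is an equilibrium: a player, of square-root weight at
  least 1, who joins another pool pushes its weight to at least h + 1, so her share can only drop,
  and alone she loses. Enough small players allow such a partition: each large player is grouped
  with \<open>\<lceil>h - \<surd>a\<rceil>\<close> small ones, and the remaining small players are split into groups of h or
  h + 1. Then OPT is at most the total stake divided by h, while the number of pools is at least
  the total square-root weight divided by h + 1.\<close>

lemma partition_on_Un:
  assumes "partition_on A P" "partition_on B Q" "disjnt A B"
  shows "partition_on (A \<union> B) (P \<union> Q)"
  using assms unfolding partition_on_def pairwise_def disjnt_def by auto blast+

lemma partition_on_uniform_blocks: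
  assumes "finite A" "card A = k * c" "0 < c"
  shows "\<exists>Q. partition_on A Q \<and> (\<forall>C\<in>Q. card C = c)"
  using assms(1,2)
proof (induction k arbitrary: A)
  case 0
  then show ?case by (auto simp: partition_on_empty)
next
  case (Suc k)
  then obtain C where C: "C \<subseteq> A" "card C = c"
    by (metis le_add1 mult_Suc obtain_subset_with_card_n)
  with Suc.prems have "card (A - C) = k * c"
    by (simp add: card_Diff_subset finite_subset)
  with Suc.IH Suc.prems(1) obtain Q where Q: "partition_on (A - C) Q" "\<forall>C\<in>Q. card C = c"
    by blast
  have "partition_on A (insert C Q)"
    using Q(1) C assms(3) by (subst partition_on_insert) (auto simp: disjnt_def dest: partition_onD1)
  with Q(2) C(2) show ?case by blast
qed

lemma partition_on_blocks_card_or_Suc: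
  assumes "finite A" "c * c \<le> card A"
  shows "\<exists>Q. partition_on A Q \<and> (\<forall>C\<in>Q. card C = c \<or> card C = Suc c)"
proof (cases "c = 0")
  case True
  then show ?thesis using partition_on_singletons[of A] by auto
next
  case False
  define q t where "q = card A div c" and "t = card A mod c"
  have "c \<le> q" using assms(2) False unfolding q_def
    by (metis div_le_mono nonzero_mult_div_cancel_right)
  moreover have "t < c" using False unfolding t_def by simp
  ultimately have card_A: "card A = t * Suc c + (q - t) * c"
    unfolding q_def t_def by (simp add: algebra_simps diff_mult_distrib)
  then obtain L where L: "L \<subseteq> A" "card L = t * Suc c"
    by (metis le_add1 obtain_subset_with_card_n)
  with assms(1) card_A have "card (A - L) = (q - t) * c"
    by (simp add: card_Diff_subset finite_subset)
  then obtain Q1 where Q1: "partition_on (A - L) Q1" "\<forall>C\<in>Q1. card C = c"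
    using partition_on_uniform_blocks assms(1) False by blast
  obtain Q2 where Q2: "partition_on L Q2" "\<forall>C\<in>Q2. card C = Suc c"
    using partition_on_uniform_blocks[OF _ L(2)] L(1) assms(1) finite_subset by blast
  have "partition_on ((A - L) \<union> L) (Q1 \<union> Q2)"
    by (rule partition_on_Un[OF Q1(1) Q2(1)]) (auto simp: disjnt_def)
  moreover have "(A - L) \<union> L = A"
    using L(1) by blast
  ultimately show ?thesis
    using Q1(2) Q2(2) by auto
qed

lemma partition_on_attach_blocks:
  assumes "finite A" "finite B" "disjnt A B" "card A = card B * m"
  shows "\<exists>Q. partition_on (A \<union> B) Q \<and> (\<forall>C\<in>Q. \<exists>b\<in>B. \<exists>A'\<subseteq>A. C = insert b A' \<and> card A' = m)"
  using assms(2,1,3,4)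
proof (induction B arbitrary: A rule: finite_induct)
  case empty
  then show ?case by (auto simp: partition_on_empty)
next
  case (insert b B)
  then obtain A0 where A0: "A0 \<subseteq> A" "card A0 = m"
    by (metis card_insert_disjoint le_add1 mult_Suc obtain_subset_with_card_n)
  with insert have "card (A - A0) = card B * m"
    by (simp add: card_Diff_subset finite_subset)
  moreover have "disjnt (A - A0) B" using insert.prems(2) by (auto simp: disjnt_def)
  ultimately obtain Q where Q: "partition_on (A - A0 \<union> B) Q"
      "\<forall>C\<in>Q. \<exists>b\<in>B. \<exists>A'\<subseteq>A - A0. C = insert b A' \<and> card A' = m"
    using insert.IH insert.prems(1) by blast
  have rest: "A \<union> insert b B - insert b A0 = A - A0 \<union> B"
    using A0(1) insert.hyps(2) insert.prems(2) by (auto simp: disjnt_def)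
  have disj: "disjnt (insert b A0) (\<Union>Q)"
    using partition_onD1[OF Q(1)] A0(1) insert.hyps(2) insert.prems(2) by (auto simp: disjnt_def)
  have "partition_on (A \<union> insert b B) (insert (insert b A0) Q)"
    unfolding partition_on_insert[OF disj] rest using Q(1) A0(1) by blast
  moreover have "\<exists>b'\<in>insert b B. \<exists>A'\<subseteq>A. C = insert b' A' \<and> card A' = m"
    if "C \<in> insert (insert b A0) Q" for C
  proof (cases "C \<in> Q")
    case True
    then obtain b' A' where "b' \<in> B" "A' \<subseteq> A - A0" "C = insert b' A'" "card A' = m"
      using Q(2) by blast
    then show ?thesis by blast
  next
    case False
    then show ?thesis using that A0 by blast
  qed
  ultimately show ?case by blast
qed

definition sqrt_weight :: "('p \<Rightarrow> nat) \<Rightarrow> 'p set \<Rightarrow> real" where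
  "sqrt_weight s C = (\<Sum>j\<in>C. sqrt (real (s j)))"

definition balanced_pool :: "nat \<Rightarrow> ('p \<Rightarrow> nat) \<Rightarrow> 'p set \<Rightarrow> bool" where
  "balanced_pool h s C \<longleftrightarrow>
     winning h s C \<and> real h \<le> sqrt_weight s C \<and> sqrt_weight s C \<le> real h + 1"

lemma sqrt_pay_le: "sqrt_pay h s C i \<le> sqrt (real (s i)) / sqrt_weight s C"
proof -
  have "0 \<le> sqrt (real (s i)) / sqrt_weight s C"
    by (simp add: sqrt_weight_def sum_nonneg)
  then show ?thesis
    by (simp add: sqrt_pay_def sqrt_weight_def rho_def)
qed

lemma sqrt_pay_winning:
  "winning h s C \<Longrightarrow> sqrt_pay h s C i = sqrt (real (s i)) / sqrt_weight s C"
  by (simp add: sqrt_pay_def sqrt_weight_def rho_def winning_def)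

lemma sqrt_pay_singleton_losing: "s i < h \<Longrightarrow> sqrt_pay h s {i} i = 0"
  by (simp add: sqrt_pay_def rho_def stake_def)

lemma is_NE_if_balanced_pools:
  assumes fin: "finite P" and part: "partition_on P Q"
    and balanced: "\<forall>C\<in>Q. balanced_pool h s C"
    and stakes: "\<forall>i\<in>P. 0 < s i \<and> s i < h"
  shows "is_NE h s P Q"
  unfolding is_NE_def
proof (intro conjI ballI allI impI)
  show "partition_on P Q" by fact
  fix C assume C: "C \<in> Q"
  then show "winning h s C"
    using balanced by (simp add: balanced_pool_def)
  fix i assume i: "i \<in> C"
  have "i \<in> P" using part C i by (auto dest: partition_onD1)
  with stakes have si: "1 \<le> sqrt (real (s i))" "s i < h" by auto
  have pay_C: "sqrt_pay h s C i = sqrt (real (s i)) / sqrt_weight s C"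
    using C balanced by (simp add: balanced_pool_def sqrt_pay_winning)
  have weight_C: "0 < sqrt_weight s C" "sqrt_weight s C \<le> real h + 1"
    using C balanced si(2) by (auto simp: balanced_pool_def)
  show "sqrt_pay h s {i} i \<le> sqrt_pay h s C i"
    using pay_C weight_C by (simp add: sqrt_pay_singleton_losing[of s i h, OF si(2)])
  fix D assume D: "D \<in> Q" "D \<noteq> C"
  have "i \<notin> D"
    using disjointD[OF partition_onD2[OF part] D(1) C D(2)] i by blast
  moreover have "finite D"
    using part D fin by (auto dest: partition_onD1 intro: finite_subset)
  ultimately have "sqrt_weight s (insert i D) = sqrt (real (s i)) + sqrt_weight s D"
    by (simp add: sqrt_weight_def)
  moreover have "real h \<le> sqrt_weight s D"
    using D(1) balanced by (simp add: balanced_pool_def)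
  \<comment> \<open>joining raises the weight of D to at least h + 1, which bounds the weight of C\<close>
  ultimately have weight_iD: "sqrt_weight s C \<le> sqrt_weight s (insert i D)"
    using si(1) weight_C by linarith
  have "sqrt (real (s i)) / sqrt_weight s (insert i D) \<le> sqrt_pay h s C i"
    unfolding pay_C using weight_C weight_iD by (intro divide_left_mono) simp_all
  then show "sqrt_pay h s (insert i D) i \<le> sqrt_pay h s C i"
    using sqrt_pay_le[of h s "insert i D" i] by linarith
qed

lemma W_le_stake:
  assumes "finite P" "partition_on P Q"
  shows "h * W h s Q \<le> stake s P"
proof -
  have "h * W h s Q = (\<Sum>C\<in>{C\<in>Q. winning h s C}. h)"
    by (simp add: W_def)
  also have "\<dots> \<le> (\<Sum>C\<in>{C\<in>Q. winning h s C}. stake s C)"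
    by (rule sum_mono) (simp add: winning_def)
  also have "\<dots> \<le> (\<Sum>C\<in>Q. stake s C)"
    using assms finite_elements by (intro sum_mono2) auto
  also have "\<dots> = stake s P"
    using assms by (simp add: stake_def sum.partition)
  finally show ?thesis .
qed

lemma OPT_le_stake:
  assumes "finite P"
  shows "h * OPT h s P \<le> stake s P"
proof -
  let ?Ws = "{W h s Q | Q. partition_on P Q}"
  have "finite ?Ws"
    using finitely_many_partition_on[OF assms] by (simp add: setcompr_eq_image)
  moreover have "?Ws \<noteq> {}"
    using partition_on_singletons by blast
  ultimately have "OPT h s P \<in> ?Ws"
    unfolding OPT_def by (rule Max_in)
  then show ?thesis
    using W_le_stake[OF assms] by auto
qed

lemma sqrt_weight_le_card:
  assumes "finite P" "partition_on P Q" "\<forall>C\<in>Q. balanced_pool h s C"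
  shows "sqrt_weight s P \<le> (real h + 1) * real (card Q)"
proof -
  have "sqrt_weight s P = (\<Sum>C\<in>Q. sqrt_weight s C)"
    using assms(1,2) by (simp add: sqrt_weight_def sum.partition)
  also have "\<dots> \<le> real (card Q) * (real h + 1)"
    using assms(3) by (intro sum_bounded_above) (simp add: balanced_pool_def)
  finally show ?thesis by (simp add: mult.commute)
qed

lemma W_eq_card:
  assumes "\<forall>C\<in>Q. balanced_pool h s C"
  shows "W h s Q = card Q"
proof -
  have "{C\<in>Q. winning h s C} = Q"
    using assms by (auto simp: balanced_pool_def)
  then show ?thesis
    by (simp add: W_def)
qed

lemma sum_two_valued:
  fixes f :: "nat \<Rightarrow> 'a::semiring_1"
  assumes "finite P" "\<forall>i\<in>P. s i = 1 \<or> s i = a" "a \<noteq> 1"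
  shows "(\<Sum>i\<in>P. f (s i)) =
    of_nat (card {i\<in>P. s i = a}) * f a + of_nat (card {i\<in>P. s i = 1}) * f 1"
proof -
  define Pa P1 where "Pa = {i\<in>P. s i = a}" and "P1 = {i\<in>P. s i = 1}"
  have "P = Pa \<union> P1" "Pa \<inter> P1 = {}" "finite Pa" "finite P1"
    using assms by (auto simp: Pa_def P1_def)
  then have "(\<Sum>i\<in>P. f (s i)) = (\<Sum>i\<in>Pa. f (s i)) + (\<Sum>i\<in>P1. f (s i))"
    by (simp add: sum.union_disjoint)
  also have "\<dots> = (\<Sum>i\<in>Pa. f a) + (\<Sum>i\<in>P1. f 1)"
    by (intro arg_cong2[where f = "(+)"] sum.cong) (auto simp: Pa_def P1_def)
  finally show ?thesis
    by (simp add: Pa_def P1_def mult.commute)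
qed

lemma sqrt_of_nat_le_self: "sqrt (real n) \<le> real n"
proof -
  have "real n \<le> real n * real n"
    using le_square[of n] by (metis of_nat_le_iff of_nat_mult)
  then have "sqrt (real n) \<le> sqrt (real n * real n)"
    by (rule real_sqrt_le_mono)
  then show ?thesis
    by simp
qed

lemma balanced_partition_of_group_size:
  assumes fin: "finite P" and two_valued: "\<forall>i\<in>P. s i = 1 \<or> s i = a" and "a \<noteq> 1"
    and weight: "real h \<le> sqrt (real a) + real m" "sqrt (real a) + real m \<le> real h + 1"
    and enough_small: "card {i\<in>P. s i = a} * m + h * h \<le> card {i\<in>P. s i = 1}"
  shows "\<exists>Q. partition_on P Q \<and> (\<forall>C\<in>Q. balanced_pool h s C)"
proof -
  define B S where "B = {i\<in>P. s i = a}" and "S = {i\<in>P. s i = 1}"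
  have fin_BS: "finite B" "finite S" and "disjnt S B"
    using fin \<open>a \<noteq> 1\<close> by (auto simp: B_def S_def disjnt_def)
  have "card B * m \<le> card S"
    using enough_small by (simp add: B_def S_def)
  then obtain S1 where S1: "S1 \<subseteq> S" "card S1 = card B * m"
    by (rule obtain_subset_with_card_n)
  have "finite S1" "disjnt S1 B"
    using S1(1) fin_BS(2) \<open>disjnt S B\<close> by (auto intro: finite_subset simp: disjnt_def)
  then obtain Q1 where Q1: "partition_on (S1 \<union> B) Q1"
      "\<forall>C\<in>Q1. \<exists>b\<in>B. \<exists>A'\<subseteq>S1. C = insert b A' \<and> card A' = m"
    using partition_on_attach_blocks[OF _ fin_BS(1) _ S1(2)] by blast
  have "h * h \<le> card (S - S1)"
    using enough_small S1 fin_BS(2) by (simp add: B_def S_def card_Diff_subset finite_subset)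
  then obtain Q2 where Q2: "partition_on (S - S1) Q2" "\<forall>C\<in>Q2. card C = h \<or> card C = Suc h"
    using partition_on_blocks_card_or_Suc fin_BS(2) by blast
  have "S1 \<union> B \<union> (S - S1) = P"
    using S1(1) two_valued by (auto simp: B_def S_def)
  moreover have "partition_on (S1 \<union> B \<union> (S - S1)) (Q1 \<union> Q2)"
    using \<open>disjnt S B\<close> by (intro partition_on_Un[OF Q1(1) Q2(1)]) (auto simp: disjnt_def)
  ultimately have "partition_on P (Q1 \<union> Q2)"
    by simp
  moreover have "balanced_pool h s C" if "C \<in> Q1" for C
  proof -
    obtain b A' where C: "b \<in> B" "A' \<subseteq> S1" "C = insert b A'" "card A' = m"
      using Q1(2) \<open>C \<in> Q1\<close> by blast
    then have "finite A'" "b \<notin> A'" "\<forall>j\<in>A'. s j = 1" "s b = a"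
      using S1(1) fin_BS(2) \<open>disjnt S B\<close> by (auto simp: B_def S_def disjnt_def intro: finite_subset)
    then have "stake s C = a + m" "sqrt_weight s C = sqrt (real a) + real m"
      using C(3,4) by (simp_all add: stake_def sqrt_weight_def)
    moreover have "sqrt (real a) \<le> real a"
      by (rule sqrt_of_nat_le_self)
    ultimately show ?thesis
      using weight by (simp add: balanced_pool_def winning_def)
  qed
  moreover have "balanced_pool h s C" if "C \<in> Q2" for C
  proof -
    have "\<forall>j\<in>C. s j = 1"
      using \<open>C \<in> Q2\<close> partition_onD1[OF Q2(1)] by (auto simp: S_def)
    then have "stake s C = card C" "sqrt_weight s C = real (card C)"
      by (simp_all add: stake_def sqrt_weight_def)
    then show ?thesis
      using Q2(2) \<open>C \<in> Q2\<close> by (auto simp: balanced_pool_def winning_def)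
  qed
  ultimately show ?thesis by blast
qed

lemma balanced_partition_exists:
  assumes "finite P" "\<forall>i\<in>P. s i = 1 \<or> s i = a" "2 \<le> a" "a < h"
    and "real h ^ 2 + real (card {i\<in>P. s i = a}) * real_of_int \<lceil>real h - sqrt (real a) + 1\<rceil>
           \<le> real (card {i\<in>P. s i = 1})"
  shows "\<exists>Q. partition_on P Q \<and> (\<forall>C\<in>Q. balanced_pool h s C)"
proof -
  define n_b n_s where "n_b = card {i\<in>P. s i = a}" and "n_s = card {i\<in>P. s i = 1}"
  define m where "m = nat \<lceil>real h - sqrt (real a)\<rceil>"
  have m: "real m = real_of_int \<lceil>real h - sqrt (real a)\<rceil>"
    using sqrt_of_nat_le_self[of a] \<open>a < h\<close> by (simp add: m_def)
  then have weight: "real h \<le> sqrt (real a) + real m" "sqrt (real a) + real m \<le> real h + 1"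
    by linarith+
  have "real_of_int \<lceil>real h - sqrt (real a) + 1\<rceil> = real m + 1"
    using m by simp
  then have "real h * real h + real n_b * real m + real n_b \<le> real n_s"
    using assms(5) by (simp add: n_b_def n_s_def power2_eq_square algebra_simps)
  then have "real (n_b * m + h * h) \<le> real n_s"
    by (simp only: of_nat_add of_nat_mult)
  then have "n_b * m + h * h \<le> n_s"
    by (simp only: of_nat_le_iff)
  then show ?thesis
    using balanced_partition_of_group_size[OF assms(1,2) _ weight] \<open>2 \<le> a\<close>
    by (simp add: n_b_def n_s_def)
qed

lemma ratio_le_of_estimates:
  fixes opt w t d h :: real
  assumes "0 < h" "h * opt \<le> t" "0 \<le> t" "0 < d" "d \<le> (h + 1) * w"
  shows "opt / w \<le> (h + 1) / h * (t / d)"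
proof -
  have "0 < w"
    using assms(1,4,5) by (smt (verit) mult_nonneg_nonpos)
  then have "opt / w \<le> t / h * (1 / w)"
    using assms(1,2) by (simp add: field_simps)
  also have "\<dots> \<le> t / h * ((h + 1) / d)"
    using assms \<open>0 < w\<close> by (intro mult_left_mono) (simp_all add: field_simps)
  finally show ?thesis
    by (simp add: field_simps)
qed

lemma OPT_div_W_le_of_balanced:
  assumes fin: "finite P" and two_valued: "\<forall>i\<in>P. s i = 1 \<or> s i = a" "a \<noteq> 1"
    and n_b: "n_b = card {i\<in>P. s i = a}" and n_s: "n_s = card {i\<in>P. s i = 1}"
    and part: "partition_on P Q" and balanced: "\<forall>C\<in>Q. balanced_pool h s C"
    and "0 < h" and pos: "0 < real n_b * (sqrt (real a) - 1) + real n_s - real h - 1"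
  shows "real (OPT h s P) / real (W h s Q)
           \<le> (real h + 1) / real h *
              ((real n_b * real a + real n_s) /
               (real n_b * (sqrt (real a) - 1) + real n_s - real h - 1))"
proof (rule ratio_le_of_estimates)
  have "stake s P = n_b * a + n_s"
    using sum_two_valued[OF fin two_valued, of id] by (simp add: stake_def n_b n_s)
  then show "real h * real (OPT h s P) \<le> real n_b * real a + real n_s"
    using OPT_le_stake[OF fin, of h s] by (simp flip: of_nat_mult of_nat_add)
  have "sqrt_weight s P = real n_b * sqrt (real a) + real n_s"
    using sum_two_valued[OF fin two_valued, of "\<lambda>x. sqrt (real x)"]
    by (simp add: sqrt_weight_def n_b n_s)
  then have "real n_b * sqrt (real a) + real n_s \<le> (real h + 1) * real (W h s Q)"
    using sqrt_weight_le_card[OF fin part balanced] W_eq_card[OF balanced] by simp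
  then show "real n_b * (sqrt (real a) - 1) + real n_s - real h - 1 \<le> (real h + 1) * real (W h s Q)"
    by (simp add: algebra_simps)
qed (use \<open>0 < h\<close> pos in auto)

theorem theoremD2:
  fixes P :: "'p set" and s :: "'p \<Rightarrow> nat" and h a n_b n_s :: nat
  assumes "finite P"
    and "2 \<le> a" and "a \<le> h - 1"
    and "\<forall>i\<in>P. s i = 1 \<or> s i = a"
    and "n_b = card {i\<in>P. s i = a}"
    and "n_s = card {i\<in>P. s i = 1}"
    and "real n_s \<ge> real h ^ 2 + real n_b * real_of_int \<lceil>real h - sqrt (real a) + 1\<rceil>"
  shows "\<exists>Q. is_NE h s P Q \<and>
           real (OPT h s P) / real (W h s Q)
             \<le> (real h + 1) / real h *
                ((real n_b * real a + real n_s) /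
                 (real n_b * (sqrt (real a) - 1) + real n_s - real h - 1))"
proof -
  have "a < h" "0 < h" "3 \<le> h" "a \<noteq> 1"
    using assms(2,3) by auto
  obtain Q where part: "partition_on P Q" and balanced: "\<forall>C\<in>Q. balanced_pool h s C"
    using balanced_partition_exists[OF assms(1,4,2) \<open>a < h\<close>] assms(5-7) by blast
  have "\<forall>i\<in>P. 0 < s i \<and> s i < h"
    using assms(2,4) \<open>a < h\<close> by auto
  then have "is_NE h s P Q"
    by (rule is_NE_if_balanced_pools[OF assms(1) part balanced])
  moreover have "0 < real n_b * (sqrt (real a) - 1) + real n_s - real h - 1"
  proof -
    have "0 \<le> real n_b * (sqrt (real a) - 1)"
      using \<open>2 \<le> a\<close> by simp
    moreover have "0 \<le> real n_b * real_of_int \<lceil>real h - sqrt (real a) + 1\<rceil>"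
      using sqrt_of_nat_le_self[of a] \<open>a < h\<close> by simp
    moreover have "3 * real h \<le> real h ^ 2"
      using \<open>3 \<le> h\<close> by (simp add: power2_eq_square mult_right_mono)
    ultimately show ?thesis
      using assms(7) \<open>3 \<le> h\<close> by linarith
  qed
  ultimately show ?thesis
    using OPT_div_W_le_of_balanced[OF assms(1,4) \<open>a \<noteq> 1\<close> assms(5,6) part balanced \<open>0 < h\<close>]
    by blast
qed

end
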